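(* Let $G=(V,E)$ be a finite graph. (a) Eulerian equivalence $\sim$ is an equivalence relation on the set $\mathcal O(G)$ of orientations. (b) If $\rho,\sigma\in\mathcal O(G)$ are Eulerian equivalent and $\rho$ is totally cyclic, then so is $\sigma$. (c) Let $q$ be a positive integer and $\rho,\sigma\in\mathcal O(G)$ with $\rho\sim\sigma$. Then $Q_{\rho,\sigma}$ restricts to a bijection $q\bar\Delta^+_{\mathrm{FL}}(G,\sigma)\to q\bar\Delta^+_{\mathrm{FL}}(G,\rho)$ sending lattice points to lattice points; in particular $Q_{\rho,\sigma}(q\Delta^+_{\mathrm{FL}}(G,\sigma))=q\Delta^+_{\mathrm{FL}}(G,\rho)$, $\varphi_\rho(G,q)=\varphi_\sigma(G,q)$ and $\bar\varphi_\rho(G,q)=\bar\varphi_\sigma(G,q)$.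
   Context: An orientation assigns each edge (including loops) one of its two directions; $\varepsilon(v,e)=1$ ($-1$) if non-loop $e$ points out of (into) end-vertex $v$, $0$ otherwise. Real flows $F(G,\varepsilon;\mathbb R)$: $f:E\to\mathbb R$ with $\sum_e m_{v,e}f(e)=0$ for all $v$, $m_{v,e}=\varepsilon(v,e)$ for non-loops, $0$ for loops; integer flows $F(G,\varepsilon;\mathbb Z)$ similarly. A digraph is directed Eulerian if in-degree equals out-degree at each vertex (a loop contributing one of each). $\rho\sim\sigma$ (Eulerian equivalent) if the spanning subgraph whose edges are those on which $\rho,\sigma$ differ is directed Eulerian with respect to $\rho$ (equivalently $\sigma$). A cut $[S,S^c]$ (nonempty set of all edges between a nonempty proper vertex set $S$ and its complement) is directed if all its edges point from $S$ to $S^c$ or all from $S^c$ to $S$; an orientation is totally cyclic if it has no directed cut. $Q_{\rho,\sigma}:[0,q]^E\to[0,q]^E$ is $(Q_{\rho,\sigma}g)(e)=g(e)$ if $\rho,\sigma$ give $e$ the same direction and $q-g(e)$ otherwise. $q\Delta^+_{\mathrm{FL}}(G,\rho)=\{f\in F(G,\rho;\mathbb R):0<f(e)<q\ \forall e\}$, $q\bar\Delta^+_{\mathrm{FL}}(G,\rho)=\{f\in F(G,\rho;\mathbb R):0\le f(e)\le q\ \forall e\}$; lattice points are those in $\mathbb Z^E$. $\varphi_\rho(G,q)=\#\{f\in F(G,\rho;\mathbb Z):0<f(e)<q\ \forall e\}$, $\bar\varphi_\rho(G,q)=\#\{f\in F(G,\rho;\mathbb Z):0\le f(e)\le q\ \forall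 e\}$. *)

theory Defs
  imports Complex_Main
begin

text \<open>A finite graph (loops and multiple edges allowed): vertex set V, edge set E,
  and a reference assignment of ends: edge e has ends t0 e and h0 e
  (e is a loop iff t0 e = h0 e).  An orientation is a function rho :: 'e => bool:
  rho e = True means e is directed from t0 e to h0 e, False means the reverse direction.
  For a loop the two directions are distinct orientations.\<close>

definition finite_graph :: "'v set \<Rightarrow> 'e set \<Rightarrow> ('e \<Rightarrow> 'v) \<Rightarrow> ('e \<Rightarrow> 'v) \<Rightarrow> bool" where
  "finite_graph V E t0 h0 \<longleftrightarrow> finite V \<and> finite E \<and> (\<forall>e\<in>E. t0 e \<in> V \<and> h0 e \<in> V)"

definition orientations :: "'e set \<Rightarrow> ('e \<Rightarrow> bool) set" where
  "orientations E = {rho. \<forall>e. e \<notin> E \<longrightarrow> rho e = True}"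

definition tail :: "('e \<Rightarrow> 'v) \<Rightarrow> ('e \<Rightarrow> 'v) \<Rightarrow> ('e \<Rightarrow> bool) \<Rightarrow> 'e \<Rightarrow> 'v" where
  "tail t0 h0 rho e = (if rho e then t0 e else h0 e)"

definition head :: "('e \<Rightarrow> 'v) \<Rightarrow> ('e \<Rightarrow> 'v) \<Rightarrow> ('e \<Rightarrow> bool) \<Rightarrow> 'e \<Rightarrow> 'v" where
  "head t0 h0 rho e = (if rho e then h0 e else t0 e)"

definition eps :: "('e \<Rightarrow> 'v) \<Rightarrow> ('e \<Rightarrow> 'v) \<Rightarrow> ('e \<Rightarrow> bool) \<Rightarrow> 'v \<Rightarrow> 'e \<Rightarrow> int" where
  "eps t0 h0 rho v e =
     (if t0 e = h0 e then 0
      else if tail t0 h0 rho e = v then 1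
      else if head t0 h0 rho e = v then -1 else 0)"

definition real_flows :: "'v set \<Rightarrow> 'e set \<Rightarrow> ('e \<Rightarrow> 'v) \<Rightarrow> ('e \<Rightarrow> 'v) \<Rightarrow> ('e \<Rightarrow> bool) \<Rightarrow> ('e \<Rightarrow> real) set" where
  "real_flows V E t0 h0 rho = {f. (\<forall>e. e \<notin> E \<longrightarrow> f e = 0) \<and>
      (\<forall>v\<in>V. (\<Sum>e\<in>E. of_int (eps t0 h0 rho v e) * f e) = 0)}"

definition int_flows :: "'v set \<Rightarrow> 'e set \<Rightarrow> ('e \<Rightarrow> 'v) \<Rightarrow> ('e \<Rightarrow> 'v) \<Rightarrow> ('e \<Rightarrow> bool) \<Rightarrow> ('e \<Rightarrow> int) set" where
  "int_flows V E t0 h0 rho = {f. (\<forall>e. e \<notin> E \<longrightarrow> f e = 0) \<and>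
      (\<forall>v\<in>V. (\<Sum>e\<in>E. eps t0 h0 rho v e * f e) = 0)}"

text \<open>the spanning subgraph with edge set D is directed Eulerian w.r.t. rho
  (a loop contributes one to in-degree and one to out-degree)\<close>
definition directed_eulerian :: "'v set \<Rightarrow> 'e set \<Rightarrow> ('e \<Rightarrow> 'v) \<Rightarrow> ('e \<Rightarrow> 'v) \<Rightarrow> ('e \<Rightarrow> bool) \<Rightarrow> bool" where
  "directed_eulerian V D t0 h0 rho \<longleftrightarrow>
     (\<forall>v\<in>V. card {e\<in>D. head t0 h0 rho e = v} = card {e\<in>D. tail t0 h0 rho e = v})"

definition diff_edges :: "'e set \<Rightarrow> ('e \<Rightarrow> bool) \<Rightarrow> ('e \<Rightarrow> bool) \<Rightarrow> 'e set" where
  "diff_edges E rho sigma = {e\<in>E. rho e \<noteq> sigma e}"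

definition eulerian_equiv :: "'v set \<Rightarrow> 'e set \<Rightarrow> ('e \<Rightarrow> 'v) \<Rightarrow> ('e \<Rightarrow> 'v) \<Rightarrow> ('e \<Rightarrow> bool) \<Rightarrow> ('e \<Rightarrow> bool) \<Rightarrow> bool" where
  "eulerian_equiv V E t0 h0 rho sigma \<longleftrightarrow> directed_eulerian V (diff_edges E rho sigma) t0 h0 rho"

definition eulerian_rel :: "'v set \<Rightarrow> 'e set \<Rightarrow> ('e \<Rightarrow> 'v) \<Rightarrow> ('e \<Rightarrow> 'v) \<Rightarrow> (('e \<Rightarrow> bool) \<times> ('e \<Rightarrow> bool)) set" where
  "eulerian_rel V E t0 h0 = {(rho, sigma). rho \<in> orientations E \<and> sigma \<in> orientations E \<and>
      eulerian_equiv V E t0 h0 rho sigma}"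

definition cut_edges :: "'v set \<Rightarrow> 'e set \<Rightarrow> ('e \<Rightarrow> 'v) \<Rightarrow> ('e \<Rightarrow> 'v) \<Rightarrow> 'v set \<Rightarrow> 'e set" where
  "cut_edges V E t0 h0 S = {e\<in>E. (t0 e \<in> S \<and> h0 e \<in> V - S) \<or> (h0 e \<in> S \<and> t0 e \<in> V - S)}"

definition is_cut :: "'v set \<Rightarrow> 'e set \<Rightarrow> ('e \<Rightarrow> 'v) \<Rightarrow> ('e \<Rightarrow> 'v) \<Rightarrow> 'v set \<Rightarrow> bool" where
  "is_cut V E t0 h0 S \<longleftrightarrow> S \<noteq> {} \<and> S \<subset> V \<and> cut_edges V E t0 h0 S \<noteq> {}"

definition directed_cut :: "'v set \<Rightarrow> 'e set \<Rightarrow> ('e \<Rightarrow> 'v) \<Rightarrow> ('e \<Rightarrow> 'v) \<Rightarrow> ('e \<Rightarrow> bool) \<Rightarrow> 'v set \<Rightarrow> bool" where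
  "directed_cut V E t0 h0 rho S \<longleftrightarrow> is_cut V E t0 h0 S \<and>
     ((\<forall>e\<in>cut_edges V E t0 h0 S. tail t0 h0 rho e \<in> S \<and> head t0 h0 rho e \<in> V - S) \<or>
      (\<forall>e\<in>cut_edges V E t0 h0 S. tail t0 h0 rho e \<in> V - S \<and> head t0 h0 rho e \<in> S))"

definition totally_cyclic :: "'v set \<Rightarrow> 'e set \<Rightarrow> ('e \<Rightarrow> 'v) \<Rightarrow> ('e \<Rightarrow> 'v) \<Rightarrow> ('e \<Rightarrow> bool) \<Rightarrow> bool" where
  "totally_cyclic V E t0 h0 rho \<longleftrightarrow> (\<nexists>S. directed_cut V E t0 h0 rho S)"

definition Qmap :: "('e \<Rightarrow> bool) \<Rightarrow> ('e \<Rightarrow> bool) \<Rightarrow> real \<Rightarrow> ('e \<Rightarrow> real) \<Rightarrow> ('e \<Rightarrow> real)" where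
  "Qmap rho sigma q g = (\<lambda>e. if rho e = sigma e then g e else q - g e)"

definition open_FL :: "'v set \<Rightarrow> 'e set \<Rightarrow> ('e \<Rightarrow> 'v) \<Rightarrow> ('e \<Rightarrow> 'v) \<Rightarrow> ('e \<Rightarrow> bool) \<Rightarrow> real \<Rightarrow> ('e \<Rightarrow> real) set" where
  "open_FL V E t0 h0 rho q = {f\<in>real_flows V E t0 h0 rho. \<forall>e\<in>E. 0 < f e \<and> f e < q}"

definition closed_FL :: "'v set \<Rightarrow> 'e set \<Rightarrow> ('e \<Rightarrow> 'v) \<Rightarrow> ('e \<Rightarrow> 'v) \<Rightarrow> ('e \<Rightarrow> bool) \<Rightarrow> real \<Rightarrow> ('e \<Rightarrow> real) set" where
  "closed_FL V E t0 h0 rho q = {f\<in>real_flows V E t0 h0 rho. \<forall>e\<in>E. 0 \<le> f e \<and> f e \<le> q}"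

definition lattice_pt :: "('e \<Rightarrow> real) \<Rightarrow> bool" where
  "lattice_pt f \<longleftrightarrow> (\<forall>e. f e \<in> \<int>)"

definition phi :: "'v set \<Rightarrow> 'e set \<Rightarrow> ('e \<Rightarrow> 'v) \<Rightarrow> ('e \<Rightarrow> 'v) \<Rightarrow> ('e \<Rightarrow> bool) \<Rightarrow> nat \<Rightarrow> nat" where
  "phi V E t0 h0 rho q = card {f\<in>int_flows V E t0 h0 rho. \<forall>e\<in>E. 0 < f e \<and> f e < int q}"

definition phibar :: "'v set \<Rightarrow> 'e set \<Rightarrow> ('e \<Rightarrow> 'v) \<Rightarrow> ('e \<Rightarrow> 'v) \<Rightarrow> ('e \<Rightarrow> bool) \<Rightarrow> nat \<Rightarrow> nat" where
  "phibar V E t0 h0 rho q = card {f\<in>int_flows V E t0 h0 rho. \<forall>e\<in>E. 0 \<le> f e \<and> f e \<le> int q}"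

end

theory Submission imports Defs begin

text \<open>Reversing the edges on which two Eulerian equivalent orientations differ changes no
  vertex's net outflow, since those edges form a directed Eulerian subgraph; so Eulerian
  equivalence is equality of net outflows, hence an equivalence relation. Summing the
  vanishing net outflow of the reversed edges over one side S of a cut shows that the
  reversed edges crossing the cut cancel; if the cut is directed for one orientation they
  all cross it in the same direction, so there are none, and the cut is directed for the
  other orientation as well. Finally, a flow stays a flow when each reversed edge e carries
  q - f(e) instead of f(e): the constant q contributes q times the net outflow of the
  reversed edges, which is zero.\<close>

lemma eps_eq_tail_minus_head:
  "eps t0 h0 rho v e =
     (if tail t0 h0 rho e = v then 1 else 0) - (if head t0 h0 rho e = v then 1 else 0)"
  by (auto simp: eps_def tail_def head_def)

lemma eps_reorient:
  "eps t0 h0 sigma v e = (if rho e = sigma e then eps t0 h0 rho v e else - eps t0 h0 rho v e)"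
  by (cases "rho e"; cases "sigma e") (simp_all add: eps_def tail_def head_def)

lemma eulerian_equiv_iff_sum_eps:
  assumes "finite E"
  shows "eulerian_equiv V E t0 h0 rho sigma \<longleftrightarrow>
    (\<forall>v\<in>V. (\<Sum>e\<in>diff_edges E rho sigma. eps t0 h0 rho v e) = 0)"
proof -
  let ?D = "diff_edges E rho sigma"
  have "finite ?D" using assms by (simp add: diff_edges_def)
  then have "(\<Sum>e\<in>?D. eps t0 h0 rho v e) =
      int (card {e\<in>?D. tail t0 h0 rho e = v}) - int (card {e\<in>?D. head t0 h0 rho e = v})" for v
    by (simp add: eps_eq_tail_minus_head sum_subtractf sum.inter_filter[symmetric])
  then show ?thesis by (auto simp: eulerian_equiv_def directed_eulerian_def)
qed

definition net_outflow :: "'e set \<Rightarrow> ('e \<Rightarrow> 'v) \<Rightarrow> ('e \<Rightarrow> 'v) \<Rightarrow> ('e \<Rightarrow> bool) \<Rightarrow> 'v \<Rightarrow> int" where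
  "net_outflow E t0 h0 rho v = (\<Sum>e\<in>E. eps t0 h0 rho v e)"

lemma net_outflow_diff:
  assumes "finite E"
  shows "net_outflow E t0 h0 rho v - net_outflow E t0 h0 sigma v =
    2 * (\<Sum>e\<in>diff_edges E rho sigma. eps t0 h0 rho v e)"
proof -
  have "net_outflow E t0 h0 rho v - net_outflow E t0 h0 sigma v =
      (\<Sum>e\<in>E. 2 * (if rho e \<noteq> sigma e then eps t0 h0 rho v e else 0))"
    unfolding net_outflow_def sum_subtractf[symmetric]
    by (rule sum.cong) (simp_all add: eps_reorient[where rho = rho and sigma = sigma])
  also have "\<dots> = 2 * (\<Sum>e\<in>diff_edges E rho sigma. eps t0 h0 rho v e)"
    using assms by (simp add: diff_edges_def sum.inter_filter flip: sum_distrib_left)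
  finally show ?thesis .
qed

lemma eulerian_equiv_iff_net_outflow:
  assumes "finite E"
  shows "eulerian_equiv V E t0 h0 rho sigma \<longleftrightarrow>
    (\<forall>v\<in>V. net_outflow E t0 h0 rho v = net_outflow E t0 h0 sigma v)"
proof -
  have "net_outflow E t0 h0 rho v = net_outflow E t0 h0 sigma v \<longleftrightarrow>
      (\<Sum>e\<in>diff_edges E rho sigma. eps t0 h0 rho v e) = 0" for v
    using net_outflow_diff[OF assms, of t0 h0 rho v sigma] by linarith
  then show ?thesis using assms by (simp add: eulerian_equiv_iff_sum_eps)
qed

lemma eulerian_equiv_sym:
  "finite E \<Longrightarrow> eulerian_equiv V E t0 h0 rho sigma \<Longrightarrow> eulerian_equiv V E t0 h0 sigma rho"
  by (simp add: eulerian_equiv_iff_net_outflow)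

lemma equiv_eulerian_rel:
  assumes "finite E"
  shows "equiv (orientations E) (eulerian_rel V E t0 h0)"
proof -
  have "eulerian_rel V E t0 h0 = {(rho, sigma). rho \<in> orientations E \<and> sigma \<in> orientations E \<and>
      (\<forall>v\<in>V. net_outflow E t0 h0 rho v = net_outflow E t0 h0 sigma v)}"
    using assms by (simp add: eulerian_rel_def eulerian_equiv_iff_net_outflow)
  then show ?thesis
    by (intro equivI) (auto simp: refl_on_def sym_def trans_def)
qed

lemma sum_eps_over_set:
  "finite S \<Longrightarrow> (\<Sum>v\<in>S. eps t0 h0 rho v e) =
    (if tail t0 h0 rho e \<in> S then 1 else 0) - (if head t0 h0 rho e \<in> S then 1 else 0)"
  by (simp add: eps_eq_tail_minus_head sum_subtractf)

lemma eulerian_equiv_crossings_cancel: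
  assumes G: "finite_graph V E t0 h0" and eq: "eulerian_equiv V E t0 h0 rho sigma" and "S \<subseteq> V"
  shows "(\<Sum>e\<in>diff_edges E rho sigma.
    (if tail t0 h0 rho e \<in> S then 1 else 0) - (if head t0 h0 rho e \<in> S then 1 else 0 :: int)) = 0"
proof -
  have "finite E" "finite S" using G \<open>S \<subseteq> V\<close> finite_subset by (auto simp: finite_graph_def)
  then have "(\<Sum>e\<in>diff_edges E rho sigma.
      (if tail t0 h0 rho e \<in> S then 1 else 0) - (if head t0 h0 rho e \<in> S then 1 else 0 :: int)) =
      (\<Sum>v\<in>S. \<Sum>e\<in>diff_edges E rho sigma. eps t0 h0 rho v e)"
    by (simp add: sum_eps_over_set flip: sum.swap[of _ S])
  also have "\<dots> = 0"
    using eq \<open>finite E\<close> \<open>S \<subseteq> V\<close> by (auto simp: eulerian_equiv_iff_sum_eps intro: sum.neutral)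
  finally show ?thesis .
qed

lemma sum_eq_0_same_sign:
  fixes f :: "'a \<Rightarrow> 'b::ordered_ab_group_add"
  assumes "finite A" "sum f A = 0" "(\<forall>x\<in>A. f x \<le> 0) \<or> (\<forall>x\<in>A. 0 \<le> f x)" "x \<in> A"
  shows "f x = 0"
proof (cases "\<forall>x\<in>A. 0 \<le> f x")
  case True
  then show ?thesis using assms(1,2,4) sum_nonneg_eq_0_iff[of A f] by simp
next
  case False
  then have "\<forall>x\<in>A. 0 \<le> - f x" using assms(3) by auto
  moreover have "(\<Sum>x\<in>A. - f x) = 0" using assms(2) by (simp add: sum_negf)
  ultimately show ?thesis using assms(1,4) sum_nonneg_eq_0_iff[of A "\<lambda>x. - f x"] by simp
qed

lemma eulerian_equiv_agrees_on_directed_cut: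
  assumes G: "finite_graph V E t0 h0" and eq: "eulerian_equiv V E t0 h0 rho sigma"
    and dc: "directed_cut V E t0 h0 sigma S" and e: "e \<in> cut_edges V E t0 h0 S"
  shows "rho e = sigma e"
proof (rule ccontr)
  assume "rho e \<noteq> sigma e"
  let ?D = "diff_edges E rho sigma" and ?C = "cut_edges V E t0 h0 S"
  define crossing where "crossing d =
    (if tail t0 h0 rho d \<in> S then 1 else 0) - (if head t0 h0 rho d \<in> S then 1 else 0 :: int)" for d
  have SV: "S \<subseteq> V" using dc by (auto simp: directed_cut_def is_cut_def)
  have ends: "t0 d \<in> V" "h0 d \<in> V" if "d \<in> E" for d
    using G that by (auto simp: finite_graph_def)
  have uncut: "crossing d = 0" if "d \<in> E" "d \<notin> ?C" for d
    using that ends[OF that(1)] by (auto simp: crossing_def cut_edges_def tail_def head_def)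
  have reversed: "crossing d =
      (if head t0 h0 sigma d \<in> S then 1 else 0) - (if tail t0 h0 sigma d \<in> S then 1 else 0)"
    if "d \<in> ?D" for d
    using that by (auto simp: crossing_def diff_edges_def tail_def head_def)
  have "(\<forall>d\<in>?C. tail t0 h0 sigma d \<in> S \<and> head t0 h0 sigma d \<in> V - S) \<or>
      (\<forall>d\<in>?C. tail t0 h0 sigma d \<in> V - S \<and> head t0 h0 sigma d \<in> S)"
    using dc by (simp only: directed_cut_def)
  then consider (out) "\<forall>d\<in>?C. tail t0 h0 sigma d \<in> S \<and> head t0 h0 sigma d \<in> V - S"
    | (into) "\<forall>d\<in>?C. tail t0 h0 sigma d \<in> V - S \<and> head t0 h0 sigma d \<in> S"
    by argo
  then have sign: "(\<forall>d\<in>?D. crossing d \<le> 0) \<or> (\<forall>d\<in>?D. 0 \<le> crossing d)"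
  proof cases
    case out
    have "crossing d \<le> 0" if "d \<in> ?D" for d
      using that out uncut[of d] reversed[OF that] by (cases "d \<in> ?C") (auto simp: diff_edges_def)
    then show ?thesis by blast
  next
    case into
    have "0 \<le> crossing d" if "d \<in> ?D" for d
      using that into uncut[of d] reversed[OF that] by (cases "d \<in> ?C") (auto simp: diff_edges_def)
    then show ?thesis by blast
  qed
  have "finite ?D" using G by (simp add: finite_graph_def diff_edges_def)
  moreover have "sum crossing ?D = 0"
    using eulerian_equiv_crossings_cancel[OF G eq SV] by (simp add: crossing_def)
  moreover note sign
  moreover have "e \<in> ?D" using e \<open>rho e \<noteq> sigma e\<close> by (simp add: cut_edges_def diff_edges_def)
  ultimately have "crossing e = 0" by (rule sum_eq_0_same_sign)
  moreover have "crossing e \<noteq> 0"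
    using e by (auto simp: crossing_def cut_edges_def tail_def head_def)
  ultimately show False by simp
qed

lemma totally_cyclic_eulerian_equiv:
  assumes G: "finite_graph V E t0 h0" and eq: "eulerian_equiv V E t0 h0 rho sigma"
    and "totally_cyclic V E t0 h0 rho"
  shows "totally_cyclic V E t0 h0 sigma"
  unfolding totally_cyclic_def
proof
  assume "\<exists>S. directed_cut V E t0 h0 sigma S"
  then obtain S where dc: "directed_cut V E t0 h0 sigma S" ..
  then have "directed_cut V E t0 h0 rho S"
    using eulerian_equiv_agrees_on_directed_cut[OF G eq dc]
    by (auto simp: directed_cut_def tail_def head_def)
  then show False using \<open>totally_cyclic V E t0 h0 rho\<close> by (auto simp: totally_cyclic_def)
qed

definition flows :: "'v set \<Rightarrow> 'e set \<Rightarrow> ('e \<Rightarrow> 'v) \<Rightarrow> ('e \<Rightarrow> 'v) \<Rightarrow> ('e \<Rightarrow> bool) \<Rightarrow>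
    ('e \<Rightarrow> 'a::comm_ring_1) set" where
  "flows V E t0 h0 rho = {f. (\<forall>e. e \<notin> E \<longrightarrow> f e = 0) \<and>
      (\<forall>v\<in>V. (\<Sum>e\<in>E. of_int (eps t0 h0 rho v e) * f e) = 0)}"

lemma real_flows_eq_flows: "real_flows V E t0 h0 rho = flows V E t0 h0 rho"
  by (simp add: real_flows_def flows_def)

lemma int_flows_eq_flows: "int_flows V E t0 h0 rho = flows V E t0 h0 rho"
  by (simp add: int_flows_def flows_def)

definition reflect :: "('e \<Rightarrow> bool) \<Rightarrow> ('e \<Rightarrow> bool) \<Rightarrow> 'a::comm_ring_1 \<Rightarrow> ('e \<Rightarrow> 'a) \<Rightarrow> 'e \<Rightarrow> 'a" where
  "reflect rho sigma c f e = (if rho e = sigma e then f e else c - f e)"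

lemma Qmap_eq_reflect: "Qmap rho sigma = reflect rho sigma"
  by (simp add: Qmap_def reflect_def fun_eq_iff)

lemma reflect_commute: "reflect sigma rho = reflect rho sigma"
  by (auto simp: reflect_def fun_eq_iff)

lemma reflect_reflect [simp]: "reflect rho sigma c (reflect rho sigma c f) = f"
  by (simp add: reflect_def fun_eq_iff)

lemma reflect_flows:
  assumes "finite E" and eq: "eulerian_equiv V E t0 h0 rho sigma"
    and "rho \<in> orientations E" "sigma \<in> orientations E"
    and f: "f \<in> flows V E t0 h0 sigma"
  shows "reflect rho sigma c f \<in> flows V E t0 h0 rho"
proof -
  have outside: "reflect rho sigma c f e = 0" if "e \<notin> E" for e
    using that f \<open>rho \<in> orientations E\<close> \<open>sigma \<in> orientations E\<close>
    by (simp add: reflect_def orientations_def flows_def)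
  have "(\<Sum>e\<in>E. of_int (eps t0 h0 rho v e) * reflect rho sigma c f e) = 0" if "v \<in> V" for v
  proof -
    have "(\<Sum>e\<in>E. of_int (eps t0 h0 rho v e) * reflect rho sigma c f e) =
        (\<Sum>e\<in>E. of_int (eps t0 h0 sigma v e) * f e +
          c * of_int (if rho e \<noteq> sigma e then eps t0 h0 rho v e else 0))"
      by (rule sum.cong)
        (auto simp: reflect_def eps_reorient[where rho = rho and sigma = sigma] algebra_simps)
    also have "\<dots> = (\<Sum>e\<in>E. of_int (eps t0 h0 sigma v e) * f e) +
        c * of_int (\<Sum>e\<in>diff_edges E rho sigma. eps t0 h0 rho v e)"
      using \<open>finite E\<close> by (simp add: sum.distrib sum.inter_filter diff_edges_def sum_distrib_left)
    also have "\<dots> = 0"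
      using f eq \<open>finite E\<close> \<open>v \<in> V\<close> by (simp add: flows_def eulerian_equiv_iff_sum_eps)
    finally show ?thesis .
  qed
  then show ?thesis using outside by (simp add: flows_def)
qed

lemma bij_betw_reflect_flows_in_box:
  assumes "finite E" and eq: "eulerian_equiv V E t0 h0 rho sigma"
    and or: "rho \<in> orientations E" "sigma \<in> orientations E"
    and B: "\<And>x. x \<in> B \<Longrightarrow> c - x \<in> B"
  shows "bij_betw (reflect rho sigma c) {f\<in>flows V E t0 h0 sigma. \<forall>e\<in>E. f e \<in> B}
    {f\<in>flows V E t0 h0 rho. \<forall>e\<in>E. f e \<in> B}"
proof -
  have into: "reflect rho' sigma' c ` {f\<in>flows V E t0 h0 sigma'. \<forall>e\<in>E. f e \<in> B}
      \<subseteq> {f\<in>flows V E t0 h0 rho'. \<forall>e\<in>E. f e \<in> B}"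
    if "eulerian_equiv V E t0 h0 rho' sigma'" "rho' \<in> orientations E" "sigma' \<in> orientations E"
    for rho' sigma'
    using reflect_flows[OF \<open>finite E\<close> that] B by (auto simp: reflect_def)
  show ?thesis
    using into[OF eq or] into[OF eulerian_equiv_sym[OF \<open>finite E\<close> eq] or(2,1)]
    by (intro bij_betw_byWitness[where f' = "reflect rho sigma c"]) (auto simp: reflect_commute)
qed

theorem lemma5p1:
  fixes V :: "'v set" and E :: "'e set" and t0 h0 :: "'e \<Rightarrow> 'v"
  assumes G: "finite_graph V E t0 h0"
  shows "equiv (orientations E) (eulerian_rel V E t0 h0)
    \<and> (\<forall>rho\<in>orientations E. \<forall>sigma\<in>orientations E.
           eulerian_equiv V E t0 h0 rho sigma \<longrightarrow> totally_cyclic V E t0 h0 rho \<longrightarrow>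
           totally_cyclic V E t0 h0 sigma)
    \<and> (\<forall>(q::nat) rho sigma. 0 < q \<longrightarrow> rho \<in> orientations E \<longrightarrow> sigma \<in> orientations E \<longrightarrow>
           eulerian_equiv V E t0 h0 rho sigma \<longrightarrow>
           bij_betw (Qmap rho sigma (real q)) (closed_FL V E t0 h0 sigma (real q))
                    (closed_FL V E t0 h0 rho (real q))
         \<and> (\<forall>f\<in>closed_FL V E t0 h0 sigma (real q). lattice_pt f \<longrightarrow> lattice_pt (Qmap rho sigma (real q) f))
         \<and> Qmap rho sigma (real q) ` open_FL V E t0 h0 sigma (real q) = open_FL V E t0 h0 rho (real q)
         \<and> phi V E t0 h0 rho q = phi V E t0 h0 sigma q
         \<and> phibar V E t0 h0 rho q = phibar V E t0 h0 sigma q)"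
proof (intro conjI ballI allI impI)
  have fin: "finite E" using G by (simp add: finite_graph_def)
  show "equiv (orientations E) (eulerian_rel V E t0 h0)" using equiv_eulerian_rel[OF fin] .
  show "totally_cyclic V E t0 h0 sigma"
    if "eulerian_equiv V E t0 h0 rho sigma" "totally_cyclic V E t0 h0 rho" for rho sigma
    using totally_cyclic_eulerian_equiv[OF G that] .
  fix q :: nat and rho sigma
  assume "rho \<in> orientations E" "sigma \<in> orientations E" "eulerian_equiv V E t0 h0 rho sigma"
  note box = bij_betw_reflect_flows_in_box[OF fin this(3,1,2)]
  show "bij_betw (Qmap rho sigma (real q)) (closed_FL V E t0 h0 sigma (real q))
      (closed_FL V E t0 h0 rho (real q))"
    using box[where c = "real q" and B = "{0..real q}"]
    by (simp add: closed_FL_def real_flows_eq_flows Qmap_eq_reflect)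
  show "Qmap rho sigma (real q) ` open_FL V E t0 h0 sigma (real q) = open_FL V E t0 h0 rho (real q)"
    using bij_betw_imp_surj_on[OF box[where c = "real q" and B = "{0<..<real q}"]]
    by (simp add: open_FL_def real_flows_eq_flows Qmap_eq_reflect)
  show "lattice_pt (Qmap rho sigma (real q) f)" if "lattice_pt f" for f
    using that by (simp add: lattice_pt_def Qmap_def)
  show "phi V E t0 h0 rho q = phi V E t0 h0 sigma q"
    using bij_betw_same_card[OF box[where c = "int q" and B = "{0<..<int q}"]]
    by (simp add: phi_def int_flows_eq_flows)
  show "phibar V E t0 h0 rho q = phibar V E t0 h0 sigma q"
    using bij_betw_same_card[OF box[where c = "int q" and B = "{0..int q}"]]
    by (simp add: phibar_def int_flows_eq_flows)
qed

end
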